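(* Let $F$ be the elementary cellular automaton with rule number 172. For every nonempty finite word $u\in\{0,1\}^*$, the deterministic communication complexity of $\textsc{SInv}_{F,u}$ restricted to inputs of length $n$ is bounded by a constant independent of $n$.
   Context: An elementary cellular automaton (ECA) with rule number $N\in\{0,\dots,255\}$ is the map $F:\{0,1\}^{\mathbb Z}\to\{0,1\}^{\mathbb Z}$ given by $F(x)_i=f(x_{i-1},x_i,x_{i+1})$. Here the local rule $f:\{0,1\}^3\to\{0,1\}$ is determined by $N=\sum_{a,b,c\in\{0,1\}}2^{4a+2b+c}f(a,b,c)$. For a nonempty finite word $u$, $p_u\in\{0,1\}^{\mathbb Z}$ is defined by $(p_u)_i=u_{i\bmod |u|}$. For a finite word $x$, $p_u[x]$ is the configuration equal to $x$ on positions $0,\dots,|x|-1$ and to $p_u$ elsewhere. $\textsc{SInv}_{F,u}$ is the decision problem: on input a finite word $x$, decide whether there is an integer $w$ such that for all $t\ge0$ the set of positions where $F^t(p_u)$ and $F^t(p_u[x])$ differ is contained in an interval of length $w$. For each $n$, it is regarded as a function $\{0,1\}^n\to\{0,1\}$. For a function $g:X\times Y\to Z$, $D(g)$ is the minimal depth of a deterministic two-party protocol computing $g$. In such a protocol, Alice knows $x$ and Bob knows $y$. The protocol is a binary tree: each internal node is labelled by a function of Alice's input only or of Bob's input only, with values in $\{\text{left},\text{right}\}$, and each leaf is labelled by an output value. For $g:\{0,1\}^m\to Z$, set $D(g)=\max_{0\le i<m}D(g_i)$, where $g_i:\{0,1\}^i\times\{0,1\}^{m-i}\to Z$ is $g_i(x,y)=g(xy)$.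 *)

theory Defs
  imports Main
begin

type_synonym config = "int \<Rightarrow> bool"

definition eca_local :: "nat \<Rightarrow> bool \<Rightarrow> bool \<Rightarrow> bool \<Rightarrow> bool" where
  "eca_local N a b c = bit N (4 * of_bool a + 2 * of_bool b + of_bool c)"

definition eca :: "nat \<Rightarrow> config \<Rightarrow> config" where
  "eca N x = (\<lambda>i. eca_local N (x (i - 1)) (x i) (x (i + 1)))"

definition per :: "bool list \<Rightarrow> config" where
  "per u = (\<lambda>i. u ! nat (i mod int (length u)))"

definition patch :: "bool list \<Rightarrow> bool list \<Rightarrow> config" where
  "patch u x = (\<lambda>i. if 0 \<le> i \<and> i < int (length x) then x ! nat i else per u i)"

definition SInv :: "nat \<Rightarrow> bool list \<Rightarrow> bool list \<Rightarrow> bool" where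
  "SInv N u x = (\<exists>w::int. \<forall>t::nat. \<exists>a::int.
      {i. ((eca N) ^^ t) (per u) i \<noteq> ((eca N) ^^ t) (patch u x) i} \<subseteq> {a..<a + w})"

datatype ('x, 'y, 'z) protocol =
    Leaf 'z
  | Alice "'x \<Rightarrow> bool" "('x, 'y, 'z) protocol" "('x, 'y, 'z) protocol"
  | Bob "'y \<Rightarrow> bool" "('x, 'y, 'z) protocol" "('x, 'y, 'z) protocol"

fun run :: "('x, 'y, 'z) protocol \<Rightarrow> 'x \<Rightarrow> 'y \<Rightarrow> 'z" where
  "run (Leaf z) x y = z"
| "run (Alice f l r) x y = (if f x then run l x y else run r x y)"
| "run (Bob f l r) x y = (if f y then run l x y else run r x y)"

fun depth :: "('x, 'y, 'z) protocol \<Rightarrow> nat" where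
  "depth (Leaf z) = 0"
| "depth (Alice f l r) = Suc (max (depth l) (depth r))"
| "depth (Bob f l r) = Suc (max (depth l) (depth r))"

definition D_split :: "(bool list \<Rightarrow> 'z) \<Rightarrow> nat \<Rightarrow> nat \<Rightarrow> nat" where
  "D_split g m i = (LEAST d. \<exists>P :: (bool list, bool list, 'z) protocol. depth P = d \<and>
      (\<forall>x y. length x = i \<longrightarrow> length y = m - i \<longrightarrow> run P x y = g (x @ y)))"

definition D_cc :: "(bool list \<Rightarrow> 'z) \<Rightarrow> nat \<Rightarrow> nat" where
  "D_cc g m = Max (insert 0 (D_split g m ` {..<m}))"

end

theory Submission
  imports Defs
begin

(* Rule 172 updates a cell by  F(x)_i = (if x_(i-1) then x_(i+1) else x_i).
   The key object is a wall, a block "00": it never changes.  The proof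
   distinguishes two cases for the periodic background p_u.

   (A) p_u contains a wall.  Then it contains walls arbitrarily far to the left
       and to the right of the perturbation, walls of p_u[x] at the same places,
       and the evolutions of p_u and p_u[x] agree outside of them forever.  Hence
       SInv(x) holds for every x.
   (B) p_u is wall-free.  Then SInv(x) holds iff p_u[x] is wall-free: a wall-free
       configuration becomes after one step one in which every 0 is followed by
       11, and such configurations are merely shifted left by F; conversely a
       wall of p_u[x] stays put while walls spread to the left by one cell every
       two steps, and every wall of F^t(p_u[x]) is a difference with F^t(p_u).

   So SInv is either constant or "no 00 in the word", which Alice and Bob decide
   with a protocol of depth 3: Alice sends two bits (her part is wall-free, her
   last cell), Bob outputs the answer. *)

abbreviation rule172 :: "config \<Rightarrow> config" where
  "rule172 \<equiv> eca 172"

lemma rule172_apply: "rule172 z i = (if z (i - 1) then z (i + 1) else z i)"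
  unfolding eca_def eca_local_def
  by (cases "z (i - 1)"; cases "z i"; cases "z (i + 1)"; simp add: bit_0)

section \<open>Walls\<close>

definition wall :: "config \<Rightarrow> int \<Rightarrow> bool" where
  "wall z c \<longleftrightarrow> \<not> z c \<and> \<not> z (c + 1)"

definition wall_free :: "config \<Rightarrow> bool" where
  "wall_free z \<longleftrightarrow> (\<forall>c. \<not> wall z c)"

lemma wall_step: "wall z c \<Longrightarrow> wall (rule172 z) c"
  unfolding wall_def rule172_apply by auto

lemma wall_iter: "wall z c \<Longrightarrow> wall ((rule172 ^^ t) z) c"
  by (induction t) (auto intro: wall_step)

lemma wall_free_step:
  assumes "wall_free z" shows "wall_free (rule172 z)"
  unfolding wall_free_def
proof
  fix c
  have adj: "z j \<or> z (j + 1)" for j using assms unfolding wall_free_def wall_def by blast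
  have "z (c - 1) \<or> z c" "z c \<or> z (c + 1)" "z (c + 1) \<or> z (c + 2)"
    using adj[of "c - 1"] adj[of c] adj[of "c + 1"] by (simp_all add: add.assoc)
  then show "\<not> wall (rule172 z) c"
    unfolding wall_def rule172_apply by (auto simp: algebra_simps)
qed

lemma wall_free_iter: "wall_free z \<Longrightarrow> wall_free ((rule172 ^^ t) z)"
  by (induction t) (auto intro: wall_free_step)

lemma wall_spreads_left:
  assumes w: "wall z c"
  shows "\<exists>j<c. wall ((rule172 ^^ 2) z) j"
proof -
  have twice: "(rule172 ^^ 2) z = rule172 (rule172 z)"
    by (simp add: numeral_2_eq_2)
  consider "wall z (c - 1)" | "wall z (c - 3)"
    | "\<not> wall z (c - 1)" "z (c - 2)"
    | "\<not> wall z (c - 1)" "\<not> z (c - 2)" "z (c - 3)"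
    unfolding wall_def by (auto simp: algebra_simps)
  then show ?thesis
  proof cases
    case 1
    then show ?thesis using wall_iter by (intro exI[of _ "c - 1"]) auto
  next
    case 2
    then show ?thesis using wall_iter by (intro exI[of _ "c - 3"]) auto
  next
    case 3
    then have "wall (rule172 z) (c - 1)"
      using w unfolding wall_def rule172_apply by auto
    then show ?thesis unfolding twice by (intro exI[of _ "c - 1"]) (auto intro: wall_step)
  next
    case 4
    then have "rule172 z (c - 2)" "rule172 z (c - 1)"
      using w unfolding wall_def rule172_apply by (auto simp: algebra_simps)
    moreover have "wall (rule172 z) c" using w by (rule wall_step)
    ultimately have "wall (rule172 (rule172 z)) (c - 1)"
      unfolding wall_def rule172_apply[of "rule172 z"] by (auto simp: algebra_simps)
    then show ?thesis unfolding twice by (intro exI[of _ "c - 1"]) auto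
  qed
qed

lemma walls_drift_left:
  assumes "wall z c"
  shows "\<exists>j \<le> c - int k. wall ((rule172 ^^ (2 * k)) z) j"
proof (induction k)
  case 0
  then show ?case using assms by auto
next
  case (Suc k)
  then obtain j where j: "j \<le> c - int k" "wall ((rule172 ^^ (2 * k)) z) j" by blast
  then obtain j' where "j' < j" "wall ((rule172 ^^ 2) ((rule172 ^^ (2 * k)) z)) j'"
    using wall_spreads_left by blast
  moreover have "(rule172 ^^ 2) ((rule172 ^^ (2 * k)) z) = (rule172 ^^ (2 * Suc k)) z"
    using funpow_add[of 2 "2 * k" rule172] by simp
  ultimately show ?case using j(1) by (intro exI[of _ j']) auto
qed

section \<open>Shifting configurations\<close>

definition zeros_before_11 :: "config \<Rightarrow> bool" where
  "zeros_before_11 z \<longleftrightarrow> (\<forall>i. z i \<or> (z (i + 1) \<and> z (i + 2)))"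

lemma zeros_before_11_step:
  assumes "wall_free z" shows "zeros_before_11 (rule172 z)"
  unfolding zeros_before_11_def
proof
  fix i
  have adj: "z j \<or> z (j + 1)" for j using assms unfolding wall_free_def wall_def by blast
  have "z (i - 1) \<or> z i" "z i \<or> z (i + 1)" "z (i + 1) \<or> z (i + 2)" "z (i + 2) \<or> z (i + 3)"
    using adj[of "i - 1"] adj[of i] adj[of "i + 1"] adj[of "i + 2"] by (simp_all add: add.assoc)
  then show "rule172 z i \<or> (rule172 z (i + 1) \<and> rule172 z (i + 2))"
    unfolding rule172_apply by (auto simp: algebra_simps)
qed

lemma zeros_before_11_shift_step:
  assumes "zeros_before_11 z" shows "rule172 z = (\<lambda>i. z (i + 1))"
proof
  fix i
  show "rule172 z i = z (i + 1)"
    using assms[unfolded zeros_before_11_def, rule_format, of "i - 1"]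
    unfolding rule172_apply by (auto simp: add.commute)
qed

lemma zeros_before_11_shift_iter:
  "zeros_before_11 z \<Longrightarrow> (rule172 ^^ t) z = (\<lambda>i. z (i + int t))"
proof (induction t arbitrary: z)
  case 0
  then show ?case by simp
next
  case (Suc t)
  have "zeros_before_11 (\<lambda>i. z (i + 1))"
    using Suc.prems unfolding zeros_before_11_def by (auto simp: algebra_simps)
  then have "(rule172 ^^ t) (\<lambda>i. z (i + 1)) = (\<lambda>i. z (i + 1 + int t))"
    using Suc.IH by (simp add: ac_simps)
  then show ?case
    by (simp add: funpow_Suc_right zeros_before_11_shift_step[OF Suc.prems] ac_simps
        del: funpow.simps)
qed

section \<open>Locality\<close>

lemma agree_left_step:
  "\<forall>j<b. z j = z' j \<Longrightarrow> \<forall>j<b - 1. rule172 z j = rule172 z' j"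
  unfolding rule172_apply by auto

lemma agree_right_step:
  "\<forall>j\<ge>b. z j = z' j \<Longrightarrow> \<forall>j\<ge>b + 1. rule172 z j = rule172 z' j"
  unfolding rule172_apply by auto

lemma wall_shields_right:
  assumes "wall z c" "wall z' c" "\<forall>j\<ge>c. z j = z' j"
  shows "\<forall>j\<ge>c. (rule172 ^^ t) z j = (rule172 ^^ t) z' j"
proof (induction t)
  case 0
  then show ?case using assms(3) by simp
next
  case (Suc t)
  have walls: "wall ((rule172 ^^ Suc t) z) c" "wall ((rule172 ^^ Suc t) z') c"
    using assms(1,2) wall_iter by blast+
  show ?case
  proof (intro allI impI)
    fix j assume "c \<le> j"
    then consider "j = c" | "j = c + 1" | "c + 2 \<le> j" by linarith
    then show "(rule172 ^^ Suc t) z j = (rule172 ^^ Suc t) z' j"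
    proof cases
      case 3
      then show ?thesis using Suc.IH
        by (simp add: rule172_apply[of "(rule172 ^^ t) z"] rule172_apply[of "(rule172 ^^ t) z'"])
    qed (use walls in \<open>auto simp: wall_def\<close>)
  qed
qed

lemma wall_shields_left:
  assumes "wall z c" "wall z' c" "\<forall>j\<le>c + 1. z j = z' j"
  shows "\<forall>j\<le>c + 1. (rule172 ^^ t) z j = (rule172 ^^ t) z' j"
proof (induction t)
  case 0
  then show ?case using assms(3) by simp
next
  case (Suc t)
  have walls: "wall ((rule172 ^^ Suc t) z) c" "wall ((rule172 ^^ Suc t) z') c"
    using assms(1,2) wall_iter by blast+
  show ?case
  proof (intro allI impI)
    fix j assume "j \<le> c + 1"
    then consider "j = c" | "j = c + 1" | "j \<le> c - 1" by linarith
    then show "(rule172 ^^ Suc t) z j = (rule172 ^^ Suc t) z' j"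
    proof cases
      case 3
      then show ?thesis using Suc.IH
        by (simp add: rule172_apply[of "(rule172 ^^ t) z"] rule172_apply[of "(rule172 ^^ t) z'"])
    qed (use walls in \<open>auto simp: wall_def\<close>)
  qed
qed

lemma patch_outside: "j < 0 \<or> int (length x) \<le> j \<Longrightarrow> patch u x j = per u j"
  unfolding patch_def by auto

lemma per_wall_periodic:
  assumes "u \<noteq> []" "wall (per u) c"
  shows "wall (per u) (c + int (length u) * k)"
proof -
  have "per u (j + int (length u) * k) = per u j" for j
    using assms(1) unfolding per_def by simp
  from this[of c] this[of "c + 1"] show ?thesis
    using assms(2) unfolding wall_def by (simp add: ac_simps)
qed

lemma per_wall_beyond:
  assumes "u \<noteq> []" "wall (per u) c"
  shows "\<exists>c'\<le>b. wall (per u) c'" and "\<exists>c'\<ge>b. wall (per u) c'"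
proof -
  have L: "int (length u) \<ge> 1" using assms(1) by (cases u) auto
  have "int (length u) * (\<bar>b\<bar> + \<bar>c\<bar>) \<ge> \<bar>b\<bar> + \<bar>c\<bar>"
    using mult_right_mono[OF L, of "\<bar>b\<bar> + \<bar>c\<bar>"] by simp
  then have "c + int (length u) * - (\<bar>b\<bar> + \<bar>c\<bar>) \<le> b"
    and "c + int (length u) * (\<bar>b\<bar> + \<bar>c\<bar>) \<ge> b" by linarith+
  then show "\<exists>c'\<le>b. wall (per u) c'" and "\<exists>c'\<ge>b. wall (per u) c'"
    using per_wall_periodic[OF assms] by blast+
qed

text \<open>Case (A): walls of the background enclose every perturbation forever.\<close>
lemma SInv_background_wall:
  assumes "u \<noteq> []" "wall (per u) c"
  shows "SInv 172 u x"
proof -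
  obtain cl where cl: "cl \<le> -2" "wall (per u) cl"
    using per_wall_beyond(1)[OF assms] by blast
  obtain cr where cr: "int (length x) \<le> cr" "wall (per u) cr"
    using per_wall_beyond(2)[OF assms] by blast
  have agree_l: "\<forall>j\<le>cl + 1. per u j = patch u x j"
    and agree_r: "\<forall>j\<ge>cr. per u j = patch u x j"
    using cl(1) cr(1) patch_outside[of _ x u] by auto
  have "wall (patch u x) cl" "wall (patch u x) cr"
    using cl(2) cr(2) agree_l agree_r unfolding wall_def by auto
  then have shield_l: "\<forall>j\<le>cl + 1. (rule172 ^^ t) (per u) j = (rule172 ^^ t) (patch u x) j"
    and shield_r: "\<forall>j\<ge>cr. (rule172 ^^ t) (per u) j = (rule172 ^^ t) (patch u x) j" for t
    using wall_shields_left[OF cl(2) _ agree_l] wall_shields_right[OF cr(2) _ agree_r] by simp_all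
  have "{i. (rule172 ^^ t) (per u) i \<noteq> (rule172 ^^ t) (patch u x) i}
      \<subseteq> {cl + 2..<cl + 2 + (cr - cl)}" for t
  proof
    fix i assume "i \<in> {i. (rule172 ^^ t) (per u) i \<noteq> (rule172 ^^ t) (patch u x) i}"
    then have "\<not> i \<le> cl + 1" "\<not> cr \<le> i" using shield_l[of t] shield_r[of t] by auto
    then show "i \<in> {cl + 2..<cl + 2 + (cr - cl)}" by simp
  qed
  then show ?thesis unfolding SInv_def by blast
qed

text \<open>Case (B), wall-free perturbation: from time 1 on both evolutions are pure
  left shifts, so the difference set, of width at most |x|+2, just travels left.\<close>
lemma SInv_wall_free:
  assumes "wall_free (per u)" "wall_free (patch u x)"
  shows "SInv 172 u x"
proof -
  define n where "n = int (length x)"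
  have agree: "\<forall>j<0. per u j = patch u x j" "\<forall>j\<ge>n. per u j = patch u x j"
    using patch_outside[of _ x u] unfolding n_def by auto
  have left: "\<forall>j < -1. rule172 (per u) j = rule172 (patch u x) j"
    and right: "\<forall>j\<ge>n + 1. rule172 (per u) j = rule172 (patch u x) j"
    using agree agree_left_step[of 0] agree_right_step[of n] by auto
  have bounded: "{i. (rule172 ^^ t) (per u) i \<noteq> (rule172 ^^ t) (patch u x) i}
      \<subseteq> {- int t..<- int t + (n + 2)}" for t
  proof (cases t)
    case 0
    show ?thesis
    proof
      fix i assume "i \<in> {i. (rule172 ^^ t) (per u) i \<noteq> (rule172 ^^ t) (patch u x) i}"
      then have "per u i \<noteq> patch u x i" using 0 by simp
      then have "0 \<le> i" "i < n" using agree by (meson not_le not_less)+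
      then show "i \<in> {- int t..<- int t + (n + 2)}" using 0 by simp
    qed
  next
    case (Suc s)
    have shift: "(rule172 ^^ t) z = (\<lambda>i. rule172 z (i + int s))" if "wall_free z" for z
      using zeros_before_11_shift_iter[OF zeros_before_11_step[OF that], of s] Suc
      by (simp add: funpow_Suc_right del: funpow.simps)
    show ?thesis
    proof
      fix i assume "i \<in> {i. (rule172 ^^ t) (per u) i \<noteq> (rule172 ^^ t) (patch u x) i}"
      then have "rule172 (per u) (i + int s) \<noteq> rule172 (patch u x) (i + int s)"
        unfolding shift[OF assms(1)] shift[OF assms(2)] by simp
      then have "-1 \<le> i + int s" "i + int s < n + 1" using left right by (meson not_le not_less)+
      then show "i \<in> {- int t..<- int t + (n + 2)}" using Suc by simp
    qed
  qed
  then show ?thesis unfolding SInv_def by blast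
qed

text \<open>Case (B), perturbation with a wall: the original wall stays while walls
  spread arbitrarily far left; both are differences, as the background stays wall-free.\<close>
lemma not_SInv_wall:
  assumes "wall_free (per u)" "wall (patch u x) c"
  shows "\<not> SInv 172 u x"
proof
  assume "SInv 172 u x"
  then obtain w where w: "\<forall>t. \<exists>a. {i. (rule172 ^^ t) (per u) i \<noteq> (rule172 ^^ t) (patch u x) i}
      \<subseteq> {a..<a + w}"
    unfolding SInv_def by blast
  obtain j where j: "j \<le> c - int (nat w + 2)"
    "wall ((rule172 ^^ (2 * (nat w + 2))) (patch u x)) j"
    using walls_drift_left[OF assms(2)] by blast
  define t where "t = 2 * (nat w + 2)"
  obtain a where a: "{i. (rule172 ^^ t) (per u) i \<noteq> (rule172 ^^ t) (patch u x) i} \<subseteq> {a..<a + w}"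
    using w by blast
  have in_window: "a \<le> k + 1 \<and> k < a + w" if "wall ((rule172 ^^ t) (patch u x)) k" for k
  proof -
    have "\<not> wall ((rule172 ^^ t) (per u)) k"
      using wall_free_iter[OF assms(1)] unfolding wall_free_def by blast
    then have "(rule172 ^^ t) (per u) k \<noteq> (rule172 ^^ t) (patch u x) k \<or>
        (rule172 ^^ t) (per u) (k + 1) \<noteq> (rule172 ^^ t) (patch u x) (k + 1)"
      using that unfolding wall_def by blast
    then show ?thesis using a by auto
  qed
  have "a \<le> j + 1" using in_window j(2) unfolding t_def by blast
  moreover have "c < a + w" using in_window wall_iter[OF assms(2)] by blast
  ultimately show False using j(1) by linarith
qed

lemma SInv_172_characterisation:
  assumes "u \<noteq> []"
  shows "SInv 172 u x \<longleftrightarrow> (wall_free (per u) \<longrightarrow> wall_free (patch u x))"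
proof (cases "wall_free (per u)")
  case True
  show ?thesis
  proof (cases "wall_free (patch u x)")
    case False
    then obtain c where "wall (patch u x) c" unfolding wall_free_def by blast
    then show ?thesis using not_SInv_wall[OF True] True False by simp
  qed (simp add: SInv_wall_free[OF True])
next
  case False
  then obtain c where "wall (per u) c" unfolding wall_free_def by blast
  then show ?thesis using False SInv_background_wall[OF assms] by simp
qed

definition splice :: "int \<Rightarrow> config \<Rightarrow> config \<Rightarrow> config" where
  "splice i zl zr j = (if j < i then zl j else zr j)"

definition patch_at :: "bool list \<Rightarrow> int \<Rightarrow> bool list \<Rightarrow> config" where
  "patch_at u i y j = (if i \<le> j \<and> j < i + int (length y) then y ! nat (j - i) else per u j)"

lemma patch_append:
  "patch u (x @ y) = splice (int (length x)) (patch u x) (patch_at u (int (length x)) y)"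
proof
  fix j
  show "patch u (x @ y) j = splice (int (length x)) (patch u x) (patch_at u (int (length x)) y) j"
  proof (cases "j < int (length x)")
    case False
    then have "nat j - length x = nat (j - int (length x))" by auto
    then show ?thesis using False unfolding patch_def splice_def patch_at_def
      by (auto simp: nth_append)
  qed (auto simp: patch_def splice_def nth_append)
qed

lemma wall_free_splice:
  "wall_free (splice i zl zr) \<longleftrightarrow>
    (\<forall>j<i - 1. \<not> wall zl j) \<and> (zl (i - 1) \<or> zr i) \<and> (\<forall>j\<ge>i. \<not> wall zr j)"
proof -
  have "j < i - 1 \<or> j = i - 1 \<or> i \<le> j" for j by linarith
  then show ?thesis
    unfolding wall_free_def wall_def splice_def by (smt (verit))
qed

section \<open>Communication complexity\<close>

lemma D_split_two_bits:
  fixes g :: "bool list \<Rightarrow> bool" and a :: "bool list \<Rightarrow> bool \<times> bool"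
  assumes "\<forall>x y. length x = i \<longrightarrow> length y = m - i \<longrightarrow> g (x @ y) = h (a x) y"
  shows "D_split g m i \<le> 3"
proof -
  define answer where
    "answer v = (Bob (h v) (Leaf True) (Leaf False) :: (bool list, bool list, bool) protocol)" for v
  define P where "P = Alice (\<lambda>x. fst (a x))
      (Alice (\<lambda>x. snd (a x)) (answer (True, True)) (answer (True, False)))
      (Alice (\<lambda>x. snd (a x)) (answer (False, True)) (answer (False, False)))"
  have "run P x y = h (a x) y" for x y
    unfolding P_def answer_def by (cases "a x") auto
  moreover have "depth P = 3"
    unfolding P_def answer_def by (simp add: numeral_3_eq_3)
  ultimately show ?thesis
    unfolding D_split_def using assms by (intro Least_le) auto
qed

lemma D_cc_le: "(\<And>i. i < m \<Longrightarrow> D_split g m i \<le> C) \<Longrightarrow> D_cc g m \<le> C"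
  unfolding D_cc_def by (subst Max_le_iff) auto

text \<open>Deciding SInv for rule 172 at any cut: by the characterisation it is
  either constant or the wall-freeness of a splice.\<close>
lemma D_split_SInv_172:
  assumes "u \<noteq> []"
  shows "D_split (SInv 172 u) m i \<le> 3"
proof -
  let ?zr = "\<lambda>y. patch_at u (int i) y"
  have "SInv 172 u (x @ y) \<longleftrightarrow> (wall_free (per u) \<longrightarrow>
      ((\<forall>j<int i - 1. \<not> wall (patch u x) j) \<and> (patch u x (int i - 1) \<or> ?zr y (int i)) \<and>
       (\<forall>j\<ge>int i. \<not> wall (?zr y) j)))" if "length x = i" for x y
    unfolding SInv_172_characterisation[OF assms] patch_append wall_free_splice that ..
  then show ?thesis
    by (intro D_split_two_bits[where
          a = "\<lambda>x. ((\<forall>j<int i - 1. \<not> wall (patch u x) j), patch u x (int i - 1))" and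
          h = "\<lambda>(b1, b2) y. wall_free (per u) \<longrightarrow>
                 b1 \<and> (b2 \<or> ?zr y (int i)) \<and> (\<forall>j\<ge>int i. \<not> wall (?zr y) j)"])
      auto
qed

theorem mainTheorem9:
  fixes u :: "bool list"
  assumes "u \<noteq> []"
  shows "\<exists>C::nat. \<forall>n. D_cc (SInv 172 u) n \<le> C"
  using D_cc_le[OF D_split_SInv_172[OF assms]] by blast

end
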